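(* Let $T$ be a string of length $n$ and $1<i\le j\le n$. For each $[s,t]\in\mathsf{MUS}(T[i-1..j])$ with $s\ne i-1$, if $[s,t]\notin\mathsf{MUS}(T[i..j])$ then $\#\mathit{occ}_{T[i-1..j]}(\mathit{sqp}_{i-1,j})=2$ and $\mathit{sqp}_{i-1,j}$ is a proper substring of $T[s..t]$.
   Context: $T[a..b]$ denotes the substring of $T$ from position $a$ to $b$. For strings $S,w$, $\#\mathit{occ}_S(w)$ is the number of positions at which $w$ occurs in $S$, with $\#\mathit{occ}_S(\varepsilon)=|S|+1$. A substring $w$ of $S$ is unique in $S$ if $\#\mathit{occ}_S(w)=1$ and repeating if $\#\mathit{occ}_S(w)\ge 2$. For $1\le i\le j\le n$, $\mathsf{MUS}(T[i..j])$ is the set of intervals $[s,t]$ (positions in $T$) with $i\le s\le t\le j$ such that $T[s..t]$ is unique in $T[i..j]$ and every proper substring of $T[s..t]$ (including the empty string) is repeating in $T[i..j]$. $\mathit{sqp}_{i,j}$ is the shortest (non-empty) prefix of $T[i..j]$ that occurs at most twice in $T[i..j]$. *)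

theory Defs
  imports Main
begin

text \<open>Strings are lists; positions are 1-based. substr T a b is T[a..b].\<close>
definition substr :: "'a list \<Rightarrow> nat \<Rightarrow> nat \<Rightarrow> 'a list" where
  "substr T a b = take (Suc b - a) (drop (a - 1) T)"

text \<open>Number of occurrences of w in S (occ S [] = length S + 1).\<close>
definition occ :: "'a list \<Rightarrow> 'a list \<Rightarrow> nat" where
  "occ S w = card {k. k + length w \<le> length S \<and> take (length w) (drop k S) = w}"

definition is_substring :: "'a list \<Rightarrow> 'a list \<Rightarrow> bool" where
  "is_substring x w \<longleftrightarrow> (\<exists>u v. w = u @ x @ v)"

definition proper_substring :: "'a list \<Rightarrow> 'a list \<Rightarrow> bool" where
  "proper_substring x w \<longleftrightarrow> is_substring x w \<and> x \<noteq> w"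

definition unique_in :: "'a list \<Rightarrow> 'a list \<Rightarrow> bool" where
  "unique_in w S \<longleftrightarrow> occ S w = 1"

definition repeating_in :: "'a list \<Rightarrow> 'a list \<Rightarrow> bool" where
  "repeating_in w S \<longleftrightarrow> occ S w \<ge> 2"

text \<open>MUS(T[i..j]) as a set of intervals (s,t) of positions in T.\<close>
definition MUS :: "'a list \<Rightarrow> nat \<Rightarrow> nat \<Rightarrow> (nat \<times> nat) set" where
  "MUS T i j = {(s, t). i \<le> s \<and> s \<le> t \<and> t \<le> j
      \<and> unique_in (substr T s t) (substr T i j)
      \<and> (\<forall>x. proper_substring x (substr T s t) \<longrightarrow> repeating_in x (substr T i j))}"

definition sqp :: "'a list \<Rightarrow> nat \<Rightarrow> nat \<Rightarrow> 'a list" where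
  "sqp T i j = take (LEAST k. 1 \<le> k \<and> occ (substr T i j) (take k (substr T i j)) \<le> 2)
                    (substr T i j)"

end

theory Submission
  imports Defs "HOL-Library.Sublist"
begin

text \<open>
  Write T[i-1..j] = a # S with S = T[i..j]. Since s \<noteq> i - 1, the string w = T[s..t] lies inside S,
  and adding the letter a in front can only add occurrences starting at the first position; so w is
  still unique in S. If w is not a MUS of S, some proper substring x of w must therefore occur fewer
  than twice in S although it occurs at least twice in a # S. The only new occurrence is at the
  front, so x is a prefix of a # S occurring exactly twice. The shortest prefix of a # S occurring
  at most twice is then a prefix of x, and it occurs at least as often as x: exactly twice.
\<close>

lemma prefix_iff_take_length: "prefix u x \<longleftrightarrow> take (length u) x = u"
  unfolding prefix_def by (metis append_eq_conv_conj append_take_drop_id)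

lemma proper_substring_iff_strict_sublist: "proper_substring x w \<longleftrightarrow> strict_sublist x w"
  unfolding proper_substring_def is_substring_def strict_sublist_def sublist_def ..

lemma finite_occ_positions: "finite {k. k + length w \<le> length S \<and> P k}"
  by (rule finite_subset[of _ "{..length S}"]) auto

lemma occ_Nil: "occ S [] = Suc (length S)"
  unfolding occ_def by simp

lemma occ_Cons: "occ (a # S) w = occ S w + (if prefix w (a # S) then 1 else 0)"
proof -
  let ?occs = "\<lambda>S. {k. k + length w \<le> length S \<and> take (length w) (drop k S) = w}"
  let ?front = "if prefix w (a # S) then {0} else {}"
  have front: "0 \<in> ?occs (a # S) \<longleftrightarrow> prefix w (a # S)"
    using prefix_length_le[of w "a # S"] by (auto simp: prefix_iff_take_length)
  have shifted: "Suc m \<in> ?occs (a # S) \<longleftrightarrow> m \<in> ?occs S" for m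
    by simp
  have "?occs (a # S) = ?front \<union> Suc ` ?occs S"
  proof (rule set_eqI)
    fix k
    show "k \<in> ?occs (a # S) \<longleftrightarrow> k \<in> ?front \<union> Suc ` ?occs S"
      using front shifted by (cases k) auto
  qed
  then have "card (?occs (a # S)) = card ?front + card (Suc ` ?occs S)"
    by (simp add: card_Un_disjoint finite_occ_positions)
  then show ?thesis
    unfolding occ_def by (cases "prefix w (a # S)") (simp_all add: card_image)
qed

lemma occ_pos_if_sublist:
  assumes "sublist w S"
  shows "0 < occ S w"
proof -
  obtain u v where "S = u @ w @ v"
    using assms unfolding sublist_def by blast
  then have "length u \<in> {k. k + length w \<le> length S \<and> take (length w) (drop k S) = w}"
    by simp
  then show ?thesis
    unfolding occ_def card_gt_0_iff by (intro conjI finite_occ_positions) blast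
qed

lemma occ_le_occ_prefix:
  assumes "prefix u x"
  shows "occ S x \<le> occ S u"
  unfolding occ_def
proof (rule card_mono[OF finite_occ_positions], safe)
  fix k
  assume "k + length x \<le> length S" and x_at_k: "take (length x) (drop k S) = x"
  have "length u \<le> length x"
    using assms by (rule prefix_length_le)
  then show "k + length u \<le> length S"
    using \<open>k + length x \<le> length S\<close> by simp
  have "take (length u) (drop k S) = take (length u) x"
    using \<open>length u \<le> length x\<close> x_at_k by (metis min.absorb1 take_take)
  then show "take (length u) (drop k S) = u"
    using assms by (simp add: prefix_iff_take_length)
qed

lemma substr_Cons:
  assumes "0 < a" "a \<le> b" "b \<le> length T"
  shows "substr T a b = T ! (a - 1) # substr T (Suc a) b"
proof -
  have "drop (a - 1) T = T ! (a - 1) # drop a T"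
    using assms by (metis Cons_nth_drop_Suc Suc_pred' diff_less le_trans less_one
        order.strict_trans2)
  moreover have "Suc b - a = Suc (Suc b - Suc a)"
    using assms(2) by simp
  ultimately show ?thesis
    unfolding substr_def by simp
qed

lemma sublist_substr:
  assumes "0 < i" "i \<le> s" "s \<le> t" "t \<le> j"
  shows "sublist (substr T s t) (substr T i j)"
proof -
  let ?X = "drop (i - 1) T" and ?p = "s - i" and ?l = "Suc t - s"
  have "substr T i j = take (?p + ?l + (j - t)) ?X"
    using assms unfolding substr_def by (simp add: Suc_diff_le)
  also have "\<dots> = take ?p ?X @ take ?l (drop ?p ?X) @ take (j - t) (drop (?p + ?l) ?X)"
    by (simp only: take_add append_assoc)
  also have "take ?l (drop ?p ?X) = substr T s t"
    using assms unfolding substr_def by (simp add: add.commute)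
  finally show ?thesis
    by (simp only: sublist_appendI)
qed

definition sqp_of :: "'a list \<Rightarrow> 'a list" where
  "sqp_of S = take (LEAST k. 1 \<le> k \<and> occ S (take k S) \<le> 2) S"

lemma sqp_eq_sqp_of: "sqp T i j = sqp_of (substr T i j)"
  unfolding sqp_def sqp_of_def ..

lemma sqp_of_prefix_of_twice_occurring_prefix:
  assumes "x \<noteq> []" "prefix x S" "occ S x = 2"
  shows "occ S (sqp_of S) = 2 \<and> prefix (sqp_of S) x"
proof -
  define L where "L = (LEAST k. 1 \<le> k \<and> occ S (take k S) \<le> 2)"
  have x_eq: "take (length x) S = x"
    using assms(2) by (simp add: prefix_iff_take_length)
  have x_cand: "1 \<le> length x \<and> occ S (take (length x) S) \<le> 2"
    using assms(1,3) x_eq by (simp add: Suc_leI)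
  then have "L \<le> length x"
    unfolding L_def by (rule Least_le)
  have "1 \<le> L \<and> occ S (take L S) \<le> 2"
    unfolding L_def using x_cand by (rule LeastI)
  then have L_occ: "occ S (take L S) \<le> 2" ..
  have "take L S = take L x"
    using \<open>L \<le> length x\<close> x_eq by (metis min.absorb1 take_take)
  then have L_prefix: "prefix (take L S) x"
    by (simp add: take_is_prefix)
  then have "occ S x \<le> occ S (take L S)"
    by (rule occ_le_occ_prefix)
  with L_occ L_prefix assms(3) show ?thesis
    unfolding sqp_of_def L_def by simp
qed

lemma prefix_if_occ_grows_to_2:
  assumes "occ S x < 2" "2 \<le> occ (a # S) x"
  shows "prefix x (a # S) \<and> occ (a # S) x = 2"
  using assms occ_Cons[of a S x] by (auto split: if_splits)

lemma sqp_of_Cons_strict_sublist: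
  assumes "S \<noteq> []" "strict_sublist x w" "occ S x < 2" "2 \<le> occ (a # S) x"
  shows "occ (a # S) (sqp_of (a # S)) = 2 \<and> strict_sublist (sqp_of (a # S)) w"
proof -
  have "x \<noteq> []"
    using assms(1,3) occ_Nil[of S] by (cases S) auto
  moreover have "prefix x (a # S)" "occ (a # S) x = 2"
    using prefix_if_occ_grows_to_2[OF assms(3,4)] by auto
  ultimately have "occ (a # S) (sqp_of (a # S)) = 2" "prefix (sqp_of (a # S)) x"
    using sqp_of_prefix_of_twice_occurring_prefix by blast+
  moreover have "strict_sublist (sqp_of (a # S)) w"
    using \<open>prefix (sqp_of (a # S)) x\<close> assms(2) by (blast intro: sublist_order.le_less_trans)
  ultimately show ?thesis
    by blast
qed

theorem lemma18:
  fixes T :: "'a list" and i j s t :: nat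
  assumes "1 < i" and "i \<le> j" and "j \<le> length T"
    and "(s, t) \<in> MUS T (i - 1) j" and "s \<noteq> i - 1"
    and "(s, t) \<notin> MUS T i j"
  shows "occ (substr T (i - 1) j) (sqp T (i - 1) j) = 2
       \<and> proper_substring (sqp T (i - 1) j) (substr T s t)"
proof -
  let ?S = "substr T i j" and ?a = "T ! (i - 2)" and ?w = "substr T s t"
  have extend: "substr T (i - 1) j = ?a # ?S"
    using substr_Cons[of "i - 1" j T] assms(1-3) by (simp add: Suc_diff_Suc numeral_2_eq_2)
  have "i \<le> s" "s \<le> t" "t \<le> j" and unique: "occ (?a # ?S) ?w = 1"
    and repeating: "\<forall>x. strict_sublist x ?w \<longrightarrow> 2 \<le> occ (?a # ?S) x"
    using assms(4,5) unfolding MUS_def unique_in_def repeating_in_def extend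
      proper_substring_iff_strict_sublist by auto
  have "0 < occ ?S ?w"
    using sublist_substr[of i s t j T] assms(1) \<open>i \<le> s\<close> \<open>s \<le> t\<close> \<open>t \<le> j\<close>
    by (simp add: occ_pos_if_sublist)
  then have "unique_in ?w ?S"
    using unique occ_Cons[of ?a ?S ?w] unfolding unique_in_def by simp
  then obtain x where x: "strict_sublist x ?w" "occ ?S x < 2"
    using assms(6) \<open>i \<le> s\<close> \<open>s \<le> t\<close> \<open>t \<le> j\<close>
    unfolding MUS_def repeating_in_def proper_substring_iff_strict_sublist by auto
  have "?S \<noteq> []"
    using assms(1-3) unfolding substr_def by simp
  with x repeating have "occ (?a # ?S) (sqp_of (?a # ?S)) = 2
      \<and> strict_sublist (sqp_of (?a # ?S)) ?w"
    by (simp add: sqp_of_Cons_strict_sublist)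
  then show ?thesis
    unfolding sqp_eq_sqp_of extend proper_substring_iff_strict_sublist .
qed

end
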